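(* Fix integers $N\ge 2$ and $K\ge 1$. The class $M^{\text{RESCAL}}_{\lfloor N/32-1\rfloor}$ is not universal, i.e. $\pi(\mathcal{M}^{\text{RESCAL}}_{\lfloor N/32-1\rfloor})\ne\pi(\mathbb{R}^{N\times N\times K})$.
   Context: There are $N$ entities and $K$ relations. A score-based model assigns a score $s_k(i,j)\in\mathbb{R}$ to each triple, $i,j\in\{1,\dots,N\}$, $k\in\{1,\dots,K\}$; its scoring tensor $\mathcal{S}\in\mathbb{R}^{N\times N\times K}$ has frontal slices $\mathbf{S}_k$ with $[\mathbf{S}_k]_{ij}=s_k(i,j)$. For a real $N\times N$ matrix $\mathbf{S}$, $\pi(\mathbf{S})$ is the matrix of dense ranks: $\pi_{ij}(\mathbf{S})=1+$ (number of distinct values among entries of $\mathbf{S}$ strictly larger than $s_{ij}$). For tensors, $\pi$ acts slicewise; for a set $X$, $\pi(X)=\{\pi(x):x\in X\}$. RESCAL of size $r$: parameters $\mathbf{A}\in\mathbb{R}^{N\times r}$ (rows $\mathbf{a}_i$), $\mathbf{R}_1,\dots,\mathbf{R}_K\in\mathbb{R}^{r\times r}$, score $\mathbf{a}_i^T\mathbf{R}_k\mathbf{a}_j$; $\mathcal{M}^{\text{RESCAL}}_r$ is the set of scoring tensors of all such models. *)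

theory Defs
  imports Complex_Main
begin

text \<open>Tensors in R^{N x N x K} are represented as functions
  nat => nat => nat => real; only entries with i < N, j < N, k < K matter
  (entities are indexed 0..N-1, relations 0..K-1).\<close>

type_synonym tensor = "nat \<Rightarrow> nat \<Rightarrow> nat \<Rightarrow> real"

definition dense_rank :: "nat \<Rightarrow> (nat \<Rightarrow> nat \<Rightarrow> real) \<Rightarrow> nat \<Rightarrow> nat \<Rightarrow> nat" where
  "dense_rank N S i j =
     1 + card {v. (\<exists>i'<N. \<exists>j'<N. v = S i' j') \<and> v > S i j}"

definition rank_tensor :: "nat \<Rightarrow> nat \<Rightarrow> tensor \<Rightarrow> (nat \<Rightarrow> nat \<Rightarrow> nat \<Rightarrow> nat)" where
  "rank_tensor N K S =
     (\<lambda>i j k. if i < N \<and> j < N \<and> k < K then dense_rank N (\<lambda>a b. S a b k) i j else 0)"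

text \<open>Scoring tensors of RESCAL models of size r:
  s_k(i,j) = a_i^T R_k a_j, with A an N x r matrix and R_k r x r matrices.\<close>
definition rescal_score :: "nat \<Rightarrow> (nat \<Rightarrow> nat \<Rightarrow> real) \<Rightarrow> (nat \<Rightarrow> nat \<Rightarrow> nat \<Rightarrow> real) \<Rightarrow> tensor" where
  "rescal_score r A R = (\<lambda>i j k. \<Sum>a<r. \<Sum>b<r. A i a * R k a b * A j b)"

definition RESCAL_models :: "nat \<Rightarrow> tensor set" where
  "RESCAL_models r = {rescal_score r A R | A R. True}"

end

theory Submission
  imports Defs "Jordan_Normal_Form.Determinant"
begin

text \<open>The identity tensor has dense ranks 1 on the diagonal and 2 off it. Any real matrix
  with these ranks is \<open>c + e \<cdot> I\<close> with \<open>e > 0\<close>. A RESCAL slice of size \<open>r\<close> is a sum of \<open>r\<close>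
  rank-one matrices, so \<open>e \<cdot> I\<close> would be a sum of \<open>r + 1 < N\<close> rank-one matrices, which
  is impossible since \<open>e \<cdot> I\<close> has nonzero determinant.\<close>

lemma product_of_thin_factors_not_scalar:
  fixes U V :: "nat \<Rightarrow> nat \<Rightarrow> 'a :: field" and e :: 'a
  assumes "m < N"
    and prod: "\<And>i j. i < N \<Longrightarrow> j < N \<Longrightarrow> (\<Sum>b<m. U i b * V j b) = (if i = j then e else 0)"
  shows "e = 0"
proof -
  define X where "X = mat N N (\<lambda>(i, b). if b < m then U i b else 0)"
  define Y where "Y = mat N N (\<lambda>(b, j). if b < m then V j b else 0)"
  have X: "X \<in> carrier_mat N N" and Y: "Y \<in> carrier_mat N N"
    unfolding X_def Y_def by auto
  have "X * Y = e \<cdot>\<^sub>m 1\<^sub>m N"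
  proof (rule eq_matI)
    fix i j assume "i < dim_row (e \<cdot>\<^sub>m 1\<^sub>m N)" "j < dim_col (e \<cdot>\<^sub>m 1\<^sub>m N)"
    then have i: "i < N" and j: "j < N" by auto
    have "(X * Y) $$ (i, j) = (\<Sum>b\<in>{0..<N}. (if b < m then U i b * V j b else 0))"
      using i j X Y unfolding X_def Y_def by (auto simp: scalar_prod_def intro!: sum.cong)
    also have "\<dots> = (\<Sum>b\<in>{0..<m}. U i b * V j b)"
      using \<open>m < N\<close> by (subst sum.inter_filter[symmetric]) (auto intro!: sum.cong)
    also have "\<dots> = (e \<cdot>\<^sub>m 1\<^sub>m N) $$ (i, j)"
      using prod[OF i j] i j by (simp add: atLeast0LessThan)
    finally show "(X * Y) $$ (i, j) = (e \<cdot>\<^sub>m 1\<^sub>m N) $$ (i, j)" .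
  qed (use X Y in auto)
  then have "det X * det Y = e ^ N"
    using det_mult[OF X Y] by simp
  moreover have "det X = 0"
  proof -
    have "X *\<^sub>v unit_vec N m = 0\<^sub>v N"
      using \<open>m < N\<close> unfolding X_def
      by (intro eq_vecI) (auto simp: scalar_prod_def unit_vec_def intro!: sum.neutral)
    moreover have "unit_vec N m \<noteq> (0\<^sub>v N :: 'a vec)"
      using \<open>m < N\<close> by (metis index_unit_vec(1) index_zero_vec(1) zero_neq_one)
    ultimately show ?thesis
      using det_0_iff_vec_prod_zero_field[OF X] unit_vec_carrier by blast
  qed
  ultimately show "e = 0" by simp
qed

text \<open>The constant \<open>c\<close> is absorbed as one extra rank-one term \<open>(-c) \<cdot> 1\<close>.\<close>

lemma thin_product_not_constant_plus_scalar:
  fixes U V :: "nat \<Rightarrow> nat \<Rightarrow> 'a :: field" and c e :: 'a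
  assumes "r + 1 < N"
    and prod: "\<And>i j. i < N \<Longrightarrow> j < N \<Longrightarrow>
                 (\<Sum>b<r. U i b * V j b) = c + (if i = j then e else 0)"
  shows "e = 0"
proof (rule product_of_thin_factors_not_scalar[OF \<open>r + 1 < N\<close>])
  fix i j assume "i < N" "j < N"
  let ?U = "\<lambda>i b. if b < r then U i b else - c"
  let ?V = "\<lambda>j b. if b < r then V j b else 1"
  have "(\<Sum>b<r + 1. ?U i b * ?V j b) = (\<Sum>b<r. U i b * V j b) - c"
    by simp
  then show "(\<Sum>b<r + 1. ?U i b * ?V j b) = (if i = j then e else 0)"
    using prod[OF \<open>i < N\<close> \<open>j < N\<close>] by simp
qed

lemma finite_matrix_values:
  fixes S :: "nat \<Rightarrow> nat \<Rightarrow> 'a"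
  shows "finite {v. (\<exists>i'<N. \<exists>j'<N. v = S i' j') \<and> P v}"
proof (rule finite_subset)
  show "{v. (\<exists>i'<N. \<exists>j'<N. v = S i' j') \<and> P v} \<subseteq> (\<lambda>(a, b). S a b) ` ({..<N} \<times> {..<N})"
    by auto
qed simp

lemma dense_rank_one_imp_max:
  assumes "dense_rank N S i j = 1" "i' < N" "j' < N"
  shows "S i' j' \<le> S i j"
proof (rule ccontr)
  assume "\<not> S i' j' \<le> S i j"
  with assms(2,3) have "{v. (\<exists>i'<N. \<exists>j'<N. v = S i' j') \<and> v > S i j} \<noteq> {}"
    by force
  with finite_matrix_values have "card {v. (\<exists>i'<N. \<exists>j'<N. v = S i' j') \<and> v > S i j} \<noteq> 0"
    by simp
  with assms(1) show False
    unfolding dense_rank_def by linarith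
qed

lemma dense_rank_two_imp_larger_unique:
  assumes "dense_rank N S i j = 2"
    and "i1 < N" "j1 < N" "S i j < S i1 j1"
    and "i2 < N" "j2 < N" "S i j < S i2 j2"
  shows "S i1 j1 = S i2 j2"
proof (rule ccontr)
  assume ne: "S i1 j1 \<noteq> S i2 j2"
  have "{S i1 j1, S i2 j2} \<subseteq> {v. (\<exists>i'<N. \<exists>j'<N. v = S i' j') \<and> v > S i j}"
    using assms by auto
  then have "card {S i1 j1, S i2 j2} \<le> card {v. (\<exists>i'<N. \<exists>j'<N. v = S i' j') \<and> v > S i j}"
    by (rule card_mono[OF finite_matrix_values])
  with ne assms(1) show False
    unfolding dense_rank_def by simp
qed

lemma dense_rank_identity:
  assumes "i < N" "j < N" "N \<ge> 2"
  shows "dense_rank N (\<lambda>a b. if a = b then 1 else 0) i j = (if i = j then 1 else 2)"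
proof (cases "i = j")
  case False
  with assms have "{v. (\<exists>i'<N. \<exists>j'<N. v = (if i' = j' then 1 else (0::real))) \<and> v > 0} = {1}"
    by auto
  with False show ?thesis
    unfolding dense_rank_def by simp
qed (auto simp: dense_rank_def)

lemma identity_rank_pattern_imp_constant_plus_scalar:
  assumes "N \<ge> 2"
    and ranks: "\<And>i j. i < N \<Longrightarrow> j < N \<Longrightarrow> dense_rank N S i j = (if i = j then 1 else 2)"
  obtains e c where "e \<noteq> 0"
    and "\<And>i j. i < N \<Longrightarrow> j < N \<Longrightarrow> S i j = c + (if i = j then e else 0)"
proof
  have N: "0 < N" "1 < N" using \<open>N \<ge> 2\<close> by auto
  have top: "dense_rank N S 0 0 = 1" using ranks[OF N(1) N(1)] by simp
  have diag: "S i i = S 0 0" if "i < N" for i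
  proof -
    have "dense_rank N S i i = 1" using ranks[OF that that] by simp
    from dense_rank_one_imp_max[OF this N(1) N(1)] dense_rank_one_imp_max[OF top that that]
    show ?thesis by linarith
  qed
  have below: "S i j < S 0 0" if "i < N" "j < N" "i \<noteq> j" for i j
  proof -
    have "S i j \<noteq> S 0 0"
    proof
      assume "S i j = S 0 0"
      then have "dense_rank N S i j = dense_rank N S 0 0"
        unfolding dense_rank_def by simp
      with ranks[OF that(1,2)] top that(3) show False by simp
    qed
    with dense_rank_one_imp_max[OF top that(1,2)] show ?thesis by linarith
  qed
  have off: "S i j = S 1 0" if "i < N" "j < N" "i \<noteq> j" for i j
  proof -
    have "dense_rank N S i j = 2" "dense_rank N S 1 0 = 2"
      using ranks that N by auto
    moreover have "S i j < S 0 0" "S 1 0 < S 0 0"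
      using below that N by auto
    ultimately show ?thesis
      using dense_rank_two_imp_larger_unique[of N S i j 1 0 0 0]
        dense_rank_two_imp_larger_unique[of N S 1 0 i j 0 0] that N
      by (cases "S i j" "S 1 0" rule: linorder_cases) auto
  qed
  show "S 0 0 - S 1 0 \<noteq> 0"
    using below[of 1 0] N by simp
  show "S i j = S 1 0 + (if i = j then S 0 0 - S 1 0 else 0)" if "i < N" "j < N" for i j
    using diag[OF that(1)] off[OF that] by (cases "i = j") simp_all
qed

lemma rescal_score_slice_factor:
  "rescal_score r A R i j k = (\<Sum>b<r. (\<Sum>a<r. A i a * R k a b) * A j b)"
  unfolding rescal_score_def by (subst sum.swap) (simp add: sum_distrib_right)

lemma floor_div_32_rank_bound:
  assumes "N \<ge> 2"
  shows "nat \<lfloor>real N / 32 - 1\<rfloor> + 1 < N"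
proof (cases "\<lfloor>real N / 32 - 1\<rfloor> \<le> 0")
  case False
  then have "real (nat \<lfloor>real N / 32 - 1\<rfloor>) \<le> real N / 32 - 1" by linarith
  with assms show ?thesis by linarith
qed (use assms in auto)

theorem theorem6:
  fixes N K :: nat
  assumes "N \<ge> 2" and "K \<ge> 1"
  shows "rank_tensor N K ` RESCAL_models (nat \<lfloor>real N / 32 - 1\<rfloor>)
         \<noteq> rank_tensor N K ` (UNIV :: tensor set)"
proof
  define r where "r = nat \<lfloor>real N / 32 - 1\<rfloor>"
  define I :: tensor where "I = (\<lambda>i j k. if i = j then 1 else 0)"
  assume "rank_tensor N K ` RESCAL_models (nat \<lfloor>real N / 32 - 1\<rfloor>)
         = rank_tensor N K ` (UNIV :: tensor set)"
  then have "rank_tensor N K I \<in> rank_tensor N K ` RESCAL_models r"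
    unfolding r_def by auto
  then obtain A R where same: "rank_tensor N K (rescal_score r A R) = rank_tensor N K I"
    unfolding RESCAL_models_def by auto
  let ?S = "\<lambda>i j. rescal_score r A R i j 0"
  have ranks: "dense_rank N ?S i j = (if i = j then 1 else 2)" if "i < N" "j < N" for i j
  proof -
    have "rank_tensor N K (rescal_score r A R) i j 0 = rank_tensor N K I i j 0"
      using same by simp
    with that \<open>K \<ge> 1\<close> have "dense_rank N ?S i j = dense_rank N (\<lambda>a b. I a b 0) i j"
      unfolding rank_tensor_def by simp
    also have "\<dots> = (if i = j then 1 else 2)"
      unfolding I_def using dense_rank_identity[OF that \<open>N \<ge> 2\<close>] .
    finally show ?thesis .
  qed
  obtain e c where "e \<noteq> 0"
    and slice: "\<And>i j. i < N \<Longrightarrow> j < N \<Longrightarrow> ?S i j = c + (if i = j then e else 0)"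
    using identity_rank_pattern_imp_constant_plus_scalar[OF \<open>N \<ge> 2\<close> ranks] by blast
  have "r + 1 < N"
    unfolding r_def using floor_div_32_rank_bound[OF \<open>N \<ge> 2\<close>] .
  then have "e = 0"
    by (rule thin_product_not_constant_plus_scalar
        [where U = "\<lambda>i b. \<Sum>a<r. A i a * R 0 a b" and V = A and c = c])
      (use slice in \<open>simp add: rescal_score_slice_factor\<close>)
  with \<open>e \<noteq> 0\<close> show False ..
qed

end
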